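(* Let $K$ be a number field, let $\alpha>1$ be rational, and let $F\in K[[x^{\mathbb{R}}]]$ be a Hahn series satisfying $\sum_{i=0}^d P_i(x)F(x^{\alpha^i})=0$ for some polynomials $P_0,\dots,P_d\in K[x]$ with $P_d\ne0$. Then there is a positive integer $l$ such that $P(F(x^l))\subseteq\mathbb{Z}[\alpha,\alpha^{-1}]$; moreover $F(x^l)$ is again such an $\alpha$-Mahler Hahn series.
   Context: $K[[x^{\mathbb{R}}]]$ is the field of Hahn series $\sum_{i\in\mathbb{R}} f_ix^i$ ($f_i\in K$) with well-ordered support $P(F)=\{i:f_i\ne0\}$; $F(x^\gamma)=\sum_if_ix^{\gamma i}$. $\mathbb{Z}[\alpha,\alpha^{-1}]$ is the subring of $\mathbb{Q}$ generated by $\alpha^{\pm1}$. "$\alpha$-Mahler" means satisfying a nontrivial homogeneous equation $\sum_{i=0}^{d'} Q_i(x)G(x^{\alpha^i})=0$ with $Q_i\in K[x]$, $Q_{d'}\neq 0$. *)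

theory Defs
  imports Complex_Main "HOL-Computational_Algebra.Polynomial"
begin

definition number_field_type :: "'k::field_char_0 itself \<Rightarrow> bool" where
  "number_field_type _ \<longleftrightarrow>
     (\<exists>B::'k set. finite B \<and> (\<forall>x::'k. \<exists>c::'k \<Rightarrow> rat. x = (\<Sum>b\<in>B. of_rat (c b) * b)))"

text \<open>Support of a Hahn series F = sum_i F i x^i (coefficient function real => K).\<close>
definition hahn_support :: "(real \<Rightarrow> 'k::zero) \<Rightarrow> real set" where
  "hahn_support F = {i. F i \<noteq> 0}"

definition well_ordered_set :: "real set \<Rightarrow> bool" where
  "well_ordered_set S \<longleftrightarrow> (\<forall>A. A \<subseteq> S \<longrightarrow> A \<noteq> {} \<longrightarrow> (\<exists>m\<in>A. \<forall>a\<in>A. m \<le> a))"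

definition hahn_series :: "(real \<Rightarrow> 'k::zero) \<Rightarrow> bool" where
  "hahn_series F \<longleftrightarrow> well_ordered_set (hahn_support F)"

text \<open>F(x^gamma) = sum_i F_i x^(gamma i); its coefficient at e is F(e/gamma).\<close>
definition hahn_subst :: "(real \<Rightarrow> 'k) \<Rightarrow> real \<Rightarrow> (real \<Rightarrow> 'k)" where
  "hahn_subst F \<gamma> = (\<lambda>e. F (e / \<gamma>))"

text \<open>Coefficientwise form of sum_{i=0}^d Q_i(x) G(x^(alpha^i)) = 0:
  the coefficient of x^e is sum_i sum_k coeff(Q_i,k) * G((e-k)/alpha^i).\<close>
definition mahler_eq :: "real \<Rightarrow> (nat \<Rightarrow> 'k::comm_ring_1 poly) \<Rightarrow> nat \<Rightarrow> (real \<Rightarrow> 'k) \<Rightarrow> bool" where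
  "mahler_eq \<alpha> Q d G \<longleftrightarrow>
     (\<forall>e::real. (\<Sum>i\<le>d. \<Sum>k\<le>degree (Q i). coeff (Q i) k * G ((e - real k) / \<alpha> ^ i)) = 0)"

definition is_mahler :: "real \<Rightarrow> (real \<Rightarrow> 'k::comm_ring_1) \<Rightarrow> bool" where
  "is_mahler \<alpha> G \<longleftrightarrow> (\<exists>d Q. Q d \<noteq> 0 \<and> mahler_eq \<alpha> Q d G)"

definition int_alpha_ring :: "real \<Rightarrow> real set" where
  "int_alpha_ring \<alpha> = {x. \<exists>S::int set. \<exists>c::int \<Rightarrow> int.
       finite S \<and> x = (\<Sum>k\<in>S. of_int (c k) * \<alpha> powi k)}"

end

theory Submission
  imports Defs
begin

text \<open>Fix y in the support of F. Call z equivalent to y if \<alpha>^n z - y lies in \<int>[\<alpha>, 1/\<alpha>] for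
  some integer n; these classes are stable under the maps x \<mapsto> (x - k) / \<alpha>^i that produce the
  exponents of the Mahler equation. Let m be the least element of the support in the class of y
  (the support is well ordered) and v i the order of P i at 0. If the least of the exponents
  \<alpha>^i m + v i were attained for only one i, the coefficient of the equation at that exponent
  would be the lowest coefficient of P i times F m, which is nonzero. So
  \<alpha>^i m + v i = \<alpha>^j m + v j for some i \<noteq> j, i.e. m is one of finitely many rationals
  (v j - v i) / (\<alpha>^i - \<alpha>^j). A common denominator l of these clears m, and then
  l y \<in> \<int>[\<alpha>, 1/\<alpha>]. Substituting x^l for x preserves the well-ordering of the support and the
  Mahler equation, with P i (x^l) in place of P i.\<close>

definition trailing_degree :: "'a::zero poly \<Rightarrow> nat" where
  "trailing_degree p = (LEAST k. coeff p k \<noteq> 0)"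

lemma trailing_degree_le: "coeff p k \<noteq> 0 \<Longrightarrow> trailing_degree p \<le> k"
  unfolding trailing_degree_def by (rule Least_le)

lemma coeff_trailing_degree_nonzero: "p \<noteq> 0 \<Longrightarrow> coeff p (trailing_degree p) \<noteq> 0"
  unfolding trailing_degree_def by (rule LeastI[of _ "degree p"]) simp

lemma int_alpha_ring_add:
  assumes "x \<in> int_alpha_ring a" "y \<in> int_alpha_ring a"
  shows "x + y \<in> int_alpha_ring a"
proof -
  obtain S c where S: "finite S" "x = (\<Sum>k\<in>S. of_int (c k) * a powi k)"
    using assms(1) by (auto simp: int_alpha_ring_def)
  obtain T e where T: "finite T" "y = (\<Sum>k\<in>T. of_int (e k) * a powi k)"
    using assms(2) by (auto simp: int_alpha_ring_def)
  let ?c = "\<lambda>k. (if k \<in> S then c k else 0) + (if k \<in> T then e k else 0)"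
  have "(\<Sum>k\<in>S \<union> T. of_int (?c k) * a powi k) =
        (\<Sum>k\<in>S \<union> T. if k \<in> S then of_int (c k) * a powi k else 0) +
        (\<Sum>k\<in>S \<union> T. if k \<in> T then of_int (e k) * a powi k else 0)"
    by (auto simp: sum.distrib[symmetric] distrib_right intro!: sum.cong)
  also have "\<dots> = x + y"
    using S T by (simp flip: sum.inter_restrict)
  finally show ?thesis
    unfolding int_alpha_ring_def using S(1) T(1)
    by (intro CollectI exI[of _ "S \<union> T"] exI[of _ ?c]) simp
qed

lemma int_alpha_ring_of_int_mult:
  assumes "x \<in> int_alpha_ring a"
  shows "of_int z * x \<in> int_alpha_ring a"
proof -
  obtain S c where S: "finite S" "x = (\<Sum>k\<in>S. of_int (c k) * a powi k)"
    using assms by (auto simp: int_alpha_ring_def)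
  then have "of_int z * x = (\<Sum>k\<in>S. of_int (z * c k) * a powi k)"
    by (simp add: sum_distrib_left mult.assoc)
  then show ?thesis
    unfolding int_alpha_ring_def using S(1) by (intro CollectI exI[of _ S] exI[of _ "\<lambda>k. z * c k"]) simp
qed

lemma int_alpha_ring_diff:
  assumes "x \<in> int_alpha_ring a" "y \<in> int_alpha_ring a"
  shows "x - y \<in> int_alpha_ring a"
  using int_alpha_ring_add[OF assms(1) int_alpha_ring_of_int_mult[OF assms(2), of "-1"]] by simp

lemma of_int_mult_powi_in_int_alpha_ring: "of_int z * a powi n \<in> int_alpha_ring a"
  unfolding int_alpha_ring_def by (auto intro!: exI[of _ "{n}"] exI[of _ "\<lambda>_. z"])

definition int_alpha_equiv :: "real \<Rightarrow> real \<Rightarrow> real \<Rightarrow> bool" where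
  "int_alpha_equiv a z y \<longleftrightarrow> (\<exists>n::int. a powi n * z - y \<in> int_alpha_ring a)"

lemma int_alpha_equiv_refl: "int_alpha_equiv a y y"
  using of_int_mult_powi_in_int_alpha_ring[of 0 a 0] by (auto simp: int_alpha_equiv_def intro: exI[of _ 0])

lemma int_alpha_equiv_affine_iff:
  assumes "a \<noteq> 0"
  shows "int_alpha_equiv a ((x - real k) / a ^ i) y \<longleftrightarrow> int_alpha_equiv a x y"
proof -
  have shift: "a powi n * ((x - real k) / a ^ i) - y =
      (a powi (n - int i) * x - y) - of_int (int k) * a powi (n - int i)" for n :: int
    using assms by (simp add: power_int_diff algebra_simps diff_divide_distrib)
  show ?thesis
  proof
    assume "int_alpha_equiv a ((x - real k) / a ^ i) y"
    then obtain n where n: "a powi n * ((x - real k) / a ^ i) - y \<in> int_alpha_ring a"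
      by (auto simp: int_alpha_equiv_def)
    have "a powi (n - int i) * x - y =
        (a powi n * ((x - real k) / a ^ i) - y) + of_int (int k) * a powi (n - int i)"
      using shift[of n] by simp
    also have "\<dots> \<in> int_alpha_ring a"
      by (intro int_alpha_ring_add n of_int_mult_powi_in_int_alpha_ring)
    finally show "int_alpha_equiv a x y"
      unfolding int_alpha_equiv_def by blast
  next
    assume "int_alpha_equiv a x y"
    then obtain n where n: "a powi n * x - y \<in> int_alpha_ring a"
      by (auto simp: int_alpha_equiv_def)
    have "a powi (n + int i) * ((x - real k) / a ^ i) - y = (a powi n * x - y) - of_int (int k) * a powi n"
      using shift[of "n + int i"] by simp
    also have "\<dots> \<in> int_alpha_ring a"
      by (intro int_alpha_ring_diff n of_int_mult_powi_in_int_alpha_ring)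
    finally show "int_alpha_equiv a ((x - real k) / a ^ i) y"
      unfolding int_alpha_equiv_def by blast
  qed
qed

lemma mahler_eq_single_term:
  fixes F :: "real \<Rightarrow> 'k::comm_ring_1"
  assumes "mahler_eq a P d F" "i0 \<le> d"
    and others_vanish: "\<And>i k. i \<le> d \<Longrightarrow> (i, k) \<noteq> (i0, k0) \<Longrightarrow> coeff (P i) k * F ((e - real k) / a ^ i) = 0"
  shows "coeff (P i0) k0 * F ((e - real k0) / a ^ i0) = 0"
proof (cases "coeff (P i0) k0 = 0")
  case False
  then have "k0 \<le> degree (P i0)"
    by (rule le_degree)
  let ?t = "coeff (P i0) k0 * F ((e - real k0) / a ^ i0)"
  have "0 = (\<Sum>i\<le>d. \<Sum>k\<le>degree (P i). coeff (P i) k * F ((e - real k) / a ^ i))"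
    using assms(1) unfolding mahler_eq_def by simp
  also have "\<dots> = (\<Sum>i\<le>d. \<Sum>k\<le>degree (P i). if i = i0 then (if k = k0 then ?t else 0) else 0)"
    using others_vanish by (intro sum.cong) auto
  also have "\<dots> = (\<Sum>i\<le>d. if i = i0 then ?t else 0)"
    using \<open>k0 \<le> degree (P i0)\<close> by (intro sum.cong) auto
  also have "\<dots> = ?t"
    using \<open>i0 \<le> d\<close> by simp
  finally show ?thesis
    by simp
qed simp

lemma mahler_eq_trailing_degree_collision:
  fixes F :: "real \<Rightarrow> 'k::idom" and a m :: real
  assumes "a > 1" "mahler_eq a P d F" "P d \<noteq> 0"
    and C_affine: "\<And>x i k. (x - real k) / a ^ i \<in> C \<longleftrightarrow> x \<in> C"
    and "m \<in> C" "F m \<noteq> 0"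
    and m_least: "\<And>z. z \<in> C \<Longrightarrow> F z \<noteq> 0 \<Longrightarrow> m \<le> z"
  shows "\<exists>i\<le>d. \<exists>j\<le>d. i \<noteq> j \<and> P i \<noteq> 0 \<and> P j \<noteq> 0 \<and>
           a ^ i * m + trailing_degree (P i) = a ^ j * m + trailing_degree (P j)"
proof (rule ccontr)
  assume no_collision: "\<not> ?thesis"
  define J where "J = {i. i \<le> d \<and> P i \<noteq> 0}"
  define f where "f i = a ^ i * m + trailing_degree (P i)" for i
  have "finite J" "d \<in> J"
    using \<open>P d \<noteq> 0\<close> by (auto simp: J_def)
  then obtain i0 where "i0 \<in> J" and i0_least: "\<And>i. i \<in> J \<Longrightarrow> f i0 \<le> f i"
    using Min_in[of "f ` J"] Min_le[of "f ` J"] by (metis empty_iff finite_imageI image_iff)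
  have i0_unique: "i = i0" if "i \<in> J" "f i = f i0" for i
    using no_collision that \<open>i0 \<in> J\<close> unfolding J_def f_def by blast
  define \<mu> where "\<mu> = f i0"
  have \<mu>_i0: "(\<mu> - trailing_degree (P i0)) / a ^ i0 = m"
    using \<open>a > 1\<close> by (simp add: \<mu>_def f_def)
  have "\<mu> \<in> C"
    using C_affine \<mu>_i0 \<open>m \<in> C\<close> by metis
  have "coeff (P i) k * F ((\<mu> - real k) / a ^ i) = 0"
    if "i \<le> d" "(i, k) \<noteq> (i0, trailing_degree (P i0))" for i k
  proof (rule ccontr)
    assume "coeff (P i) k * F ((\<mu> - real k) / a ^ i) \<noteq> 0"
    then have "coeff (P i) k \<noteq> 0" "F ((\<mu> - real k) / a ^ i) \<noteq> 0"
      by auto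
    then have "i \<in> J" "trailing_degree (P i) \<le> k"
      using \<open>i \<le> d\<close> by (auto simp: J_def trailing_degree_le)
    have "m \<le> (\<mu> - real k) / a ^ i"
      using m_least C_affine \<open>\<mu> \<in> C\<close> \<open>F ((\<mu> - real k) / a ^ i) \<noteq> 0\<close> by blast
    then have "a ^ i * m + k \<le> f i0"
      using \<open>a > 1\<close> by (simp add: \<mu>_def field_simps)
    moreover have "f i0 \<le> f i"
      using i0_least \<open>i \<in> J\<close> by blast
    ultimately have "k = trailing_degree (P i)" "f i = f i0"
      using \<open>trailing_degree (P i) \<le> k\<close> by (auto simp: f_def)
    then show False
      using i0_unique \<open>i \<in> J\<close> that(2) by auto
  qed
  then have "coeff (P i0) (trailing_degree (P i0)) * F m = 0"
    using mahler_eq_single_term[OF \<open>mahler_eq a P d F\<close>, of i0] \<open>i0 \<in> J\<close> \<mu>_i0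
    by (auto simp: J_def)
  then show False
    using coeff_trailing_degree_nonzero \<open>F m \<noteq> 0\<close> \<open>i0 \<in> J\<close> by (auto simp: J_def)
qed

lemma well_ordered_setD:
  "well_ordered_set S \<Longrightarrow> A \<subseteq> S \<Longrightarrow> A \<noteq> {} \<Longrightarrow> \<exists>m\<in>A. \<forall>a\<in>A. m \<le> a"
  unfolding well_ordered_set_def by blast

lemma mahler_support_collision:
  fixes F :: "real \<Rightarrow> 'k::idom" and a :: real
  assumes "a > 1" "hahn_series F" "P d \<noteq> 0" "mahler_eq a P d F" "F y \<noteq> 0"
  obtains m i j where "i \<le> d" "j \<le> d" "i \<noteq> j"
    "a ^ i * m + trailing_degree (P i) = a ^ j * m + trailing_degree (P j)"
    "int_alpha_equiv a m y"
proof -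
  define C where "C = {z. int_alpha_equiv a z y}"
  have C_affine: "(x - real k) / a ^ i \<in> C \<longleftrightarrow> x \<in> C" for x k i
    using \<open>a > 1\<close> int_alpha_equiv_affine_iff by (simp add: C_def)
  have "{z \<in> C. F z \<noteq> 0} \<subseteq> hahn_support F" "y \<in> {z \<in> C. F z \<noteq> 0}"
    using \<open>F y \<noteq> 0\<close> int_alpha_equiv_refl by (auto simp: C_def hahn_support_def)
  then have "\<exists>m \<in> {z \<in> C. F z \<noteq> 0}. \<forall>z \<in> {z \<in> C. F z \<noteq> 0}. m \<le> z"
    using \<open>hahn_series F\<close> unfolding hahn_series_def by (blast intro: well_ordered_setD)
  then obtain m where "m \<in> C" "F m \<noteq> 0" and m_least: "\<And>z. z \<in> C \<Longrightarrow> F z \<noteq> 0 \<Longrightarrow> m \<le> z"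
    by blast
  show ?thesis
    using mahler_eq_trailing_degree_collision[OF assms(1,4,3) C_affine \<open>m \<in> C\<close> \<open>F m \<noteq> 0\<close> m_least]
      \<open>m \<in> C\<close> that by (auto simp: C_def)
qed

lemma finite_rat_set_common_denominator:
  fixes A :: "rat set"
  assumes "finite A"
  obtains l :: nat where "l > 0" "\<And>r. r \<in> A \<Longrightarrow> \<exists>z::int. of_nat l * r = of_int z"
proof
  define L where "L = (\<Prod>r\<in>A. snd (quotient_of r))"
  have "L > 0"
    unfolding L_def by (rule prod_pos) (simp add: quotient_of_denom_pos')
  then show "nat L > 0"
    by simp
  show "\<exists>z::int. of_nat (nat L) * r = of_int z" if "r \<in> A" for r
  proof -
    obtain p q where pq: "quotient_of r = (p, q)"
      by (cases "quotient_of r")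
    have "q dvd L"
      unfolding L_def using dvd_prodI[OF assms that, of "\<lambda>r. snd (quotient_of r)"] pq by simp
    then obtain t where "L = q * t"
      by (elim dvdE)
    then have "of_nat (nat L) * r = of_int (t * p)"
      using \<open>L > 0\<close> quotient_of_denom_pos[OF pq] quotient_of_div[OF pq] by (simp add: field_simps)
    then show ?thesis
      by blast
  qed
qed

lemma mahler_support_scaling:
  fixes F :: "real \<Rightarrow> 'k::idom" and \<alpha> :: rat
  assumes "\<alpha> > 1" "hahn_series F" "P d \<noteq> 0" "mahler_eq (of_rat \<alpha>) P d F"
  obtains l :: nat where "l > 0" "\<And>y. F y \<noteq> 0 \<Longrightarrow> real l * y \<in> int_alpha_ring (of_rat \<alpha>)"
proof -
  define v :: "nat \<Rightarrow> rat" where "v i = of_nat (trailing_degree (P i))" for i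
  define R where "R = (\<lambda>(i, j). (v j - v i) / (\<alpha> ^ i - \<alpha> ^ j)) ` ({..d} \<times> {..d})"
  have "finite R"
    unfolding R_def by simp
  then obtain l where "l > 0" and l_R: "\<And>r. r \<in> R \<Longrightarrow> \<exists>z::int. of_nat l * r = of_int z"
    using finite_rat_set_common_denominator by blast
  let ?a = "of_rat \<alpha> :: real"
  have "?a > 1"
    using \<open>\<alpha> > 1\<close> by (metis of_rat_1 of_rat_less)
  have "real l * y \<in> int_alpha_ring ?a" if "F y \<noteq> 0" for y
  proof -
    obtain m i j where "i \<le> d" "j \<le> d" "i \<noteq> j"
      and collision: "?a ^ i * m + trailing_degree (P i) = ?a ^ j * m + trailing_degree (P j)"
      and "int_alpha_equiv ?a m y"
      by (rule mahler_support_collision[OF \<open>?a > 1\<close> assms(2-4) \<open>F y \<noteq> 0\<close>])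
    define r where "r = (v j - v i) / (\<alpha> ^ i - \<alpha> ^ j)"
    have "?a ^ i \<noteq> ?a ^ j"
      using \<open>?a > 1\<close> \<open>i \<noteq> j\<close> by simp
    then have "m = (real (trailing_degree (P j)) - real (trailing_degree (P i))) / (?a ^ i - ?a ^ j)"
      using collision by (simp add: field_simps)
    also have "\<dots> = of_rat r"
      by (simp add: r_def v_def of_rat_divide of_rat_diff of_rat_power)
    finally have "real l * m = of_rat (of_nat l * r)"
      by (simp add: of_rat_mult)
    moreover obtain z where "of_nat l * r = of_int z"
      using l_R \<open>i \<le> d\<close> \<open>j \<le> d\<close> unfolding R_def r_def by fastforce
    ultimately have "real l * m = of_int z"
      by simp
    obtain n where "?a powi n * m - y \<in> int_alpha_ring ?a"
      using \<open>int_alpha_equiv ?a m y\<close> by (auto simp: int_alpha_equiv_def)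
    then have "of_int z * ?a powi n - of_int (int l) * (?a powi n * m - y) \<in> int_alpha_ring ?a"
      by (rule int_alpha_ring_diff[OF of_int_mult_powi_in_int_alpha_ring int_alpha_ring_of_int_mult])
    moreover have "of_int z * ?a powi n - of_int (int l) * (?a powi n * m - y) = real l * y"
      by (simp add: algebra_simps flip: \<open>real l * m = of_int z\<close>)
    ultimately show ?thesis
      by simp
  qed
  with \<open>l > 0\<close> that show ?thesis
    by blast
qed

lemma well_ordered_set_mono_image:
  assumes "well_ordered_set S" "mono f"
  shows "well_ordered_set (f ` S)"
  unfolding well_ordered_set_def
proof (intro allI impI)
  fix A
  assume "A \<subseteq> f ` S" "A \<noteq> {}"
  then have "{s \<in> S. f s \<in> A} \<subseteq> S" "{s \<in> S. f s \<in> A} \<noteq> {}"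
    by auto
  then obtain b where "b \<in> S" "f b \<in> A" and b_least: "\<And>s. s \<in> S \<Longrightarrow> f s \<in> A \<Longrightarrow> b \<le> s"
    using well_ordered_setD[OF \<open>well_ordered_set S\<close>] by (metis (no_types, lifting) mem_Collect_eq)
  have "f b \<le> a" if "a \<in> A" for a
  proof -
    obtain s where "s \<in> S" "a = f s"
      using \<open>a \<in> A\<close> \<open>A \<subseteq> f ` S\<close> by blast
    then show ?thesis
      using b_least \<open>a \<in> A\<close> \<open>mono f\<close> by (simp add: monoD)
  qed
  with \<open>f b \<in> A\<close> show "\<exists>m\<in>A. \<forall>a\<in>A. m \<le> a"
    by blast
qed

lemma hahn_support_hahn_subst:
  assumes "\<gamma> \<noteq> 0"
  shows "hahn_support (hahn_subst F \<gamma>) = (\<lambda>i. \<gamma> * i) ` hahn_support F"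
proof
  show "hahn_support (hahn_subst F \<gamma>) \<subseteq> (\<lambda>i. \<gamma> * i) ` hahn_support F"
  proof
    fix e
    assume "e \<in> hahn_support (hahn_subst F \<gamma>)"
    then show "e \<in> (\<lambda>i. \<gamma> * i) ` hahn_support F"
      using assms by (intro image_eqI[of e _ "e / \<gamma>"]) (auto simp: hahn_support_def hahn_subst_def)
  qed
  show "(\<lambda>i. \<gamma> * i) ` hahn_support F \<subseteq> hahn_support (hahn_subst F \<gamma>)"
    using assms by (auto simp: hahn_support_def hahn_subst_def)
qed

lemma hahn_series_hahn_subst:
  assumes "hahn_series F" "\<gamma> > 0"
  shows "hahn_series (hahn_subst F \<gamma>)"
proof -
  have "mono (\<lambda>i. \<gamma> * i)"
    using \<open>\<gamma> > 0\<close> by (intro monoI mult_left_mono) simp_all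
  then show ?thesis
    using assms well_ordered_set_mono_image unfolding hahn_series_def
    by (simp add: hahn_support_hahn_subst)
qed

definition poly_at_xpow :: "nat \<Rightarrow> 'a::comm_semiring_1 poly \<Rightarrow> 'a poly" where
  "poly_at_xpow l p = (\<Sum>k\<le>degree p. monom (coeff p k) (l * k))"

lemma sum_coeff_poly_at_xpow:
  "(\<Sum>j\<le>degree (poly_at_xpow l p). coeff (poly_at_xpow l p) j * h j) =
   (\<Sum>k\<le>degree p. coeff p k * h (l * k))"
proof -
  let ?Q = "poly_at_xpow l p"
  have coeff_Q: "coeff ?Q j = (\<Sum>k\<le>degree p. if l * k = j then coeff p k else 0)" for j
    by (simp add: poly_at_xpow_def coeff_sum coeff_monom)
  have "degree ?Q \<le> l * degree p"
    unfolding poly_at_xpow_def by (rule degree_sum_le) (auto intro: order.trans[OF degree_monom_le])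
  then have "(\<Sum>j\<le>degree ?Q. coeff ?Q j * h j) = (\<Sum>j\<le>l * degree p. coeff ?Q j * h j)"
    by (intro sum.mono_neutral_left) (auto simp: coeff_eq_0)
  also have "\<dots> = (\<Sum>j\<le>l * degree p. \<Sum>k\<le>degree p. if j = l * k then coeff p k * h (l * k) else 0)"
    by (auto simp: coeff_Q sum_distrib_right intro!: sum.cong)
  also have "\<dots> = (\<Sum>k\<le>degree p. \<Sum>j\<le>l * degree p. if j = l * k then coeff p k * h (l * k) else 0)"
    by (rule sum.swap)
  also have "\<dots> = (\<Sum>k\<le>degree p. coeff p k * h (l * k))"
    by (intro sum.cong) auto
  finally show ?thesis .
qed

lemma poly_at_xpow_nonzero:
  assumes "p \<noteq> 0" "l > 0"
  shows "poly_at_xpow l p \<noteq> 0"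
proof -
  have "coeff (poly_at_xpow l p) (l * degree p) = lead_coeff p"
    using \<open>l > 0\<close> by (simp add: poly_at_xpow_def coeff_sum coeff_monom)
  with \<open>p \<noteq> 0\<close> show ?thesis
    by auto
qed

lemma mahler_eq_hahn_subst:
  assumes "mahler_eq a P d F" "l > 0"
  shows "mahler_eq a (\<lambda>i. poly_at_xpow l (P i)) d (hahn_subst F (real l))"
  unfolding mahler_eq_def
proof
  fix e :: real
  have "(\<Sum>i\<le>d. \<Sum>k\<le>degree (poly_at_xpow l (P i)).
          coeff (poly_at_xpow l (P i)) k * hahn_subst F (real l) ((e - real k) / a ^ i)) =
        (\<Sum>i\<le>d. \<Sum>k\<le>degree (P i). coeff (P i) k * F ((e / real l - real k) / a ^ i))"
    unfolding sum_coeff_poly_at_xpow hahn_subst_def using \<open>l > 0\<close>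
    by (intro sum.cong refl) (simp add: field_simps)
  also have "\<dots> = 0"
    using \<open>mahler_eq a P d F\<close> unfolding mahler_eq_def by blast
  finally show "(\<Sum>i\<le>d. \<Sum>k\<le>degree (poly_at_xpow l (P i)).
      coeff (poly_at_xpow l (P i)) k * hahn_subst F (real l) ((e - real k) / a ^ i)) = 0" .
qed

lemma is_mahler_hahn_subst:
  assumes "is_mahler a F" "l > 0"
  shows "is_mahler a (hahn_subst F (real l))"
proof -
  obtain d Q where "Q d \<noteq> 0" "mahler_eq a Q d F"
    using \<open>is_mahler a F\<close> unfolding is_mahler_def by blast
  then show ?thesis
    unfolding is_mahler_def using \<open>l > 0\<close>
    by (intro exI[of _ d] exI[of _ "\<lambda>i. poly_at_xpow l (Q i)"] conjI poly_at_xpow_nonzero mahler_eq_hahn_subst)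
qed

theorem mainTheorem9:
  fixes F :: "real \<Rightarrow> 'k::field_char_0"
    and \<alpha> :: rat
    and P :: "nat \<Rightarrow> 'k poly"
    and d :: nat
  assumes "number_field_type TYPE('k)"
    and "\<alpha> > 1"
    and "hahn_series F"
    and "P d \<noteq> 0"
    and "mahler_eq (of_rat \<alpha>) P d F"
  shows "\<exists>l::nat. l > 0 \<and>
           hahn_support (hahn_subst F (real l)) \<subseteq> int_alpha_ring (of_rat \<alpha>) \<and>
           hahn_series (hahn_subst F (real l)) \<and>
           is_mahler (of_rat \<alpha>) (hahn_subst F (real l))"
proof -
  obtain l where "l > 0" and scaled: "\<And>y. F y \<noteq> 0 \<Longrightarrow> real l * y \<in> int_alpha_ring (of_rat \<alpha>)"
    using mahler_support_scaling[OF assms(2-5)] by blast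
  have "is_mahler (of_rat \<alpha>) F"
    using assms(4,5) unfolding is_mahler_def by blast
  have support: "hahn_support (hahn_subst F (real l)) = (\<lambda>i. real l * i) ` hahn_support F"
    using \<open>l > 0\<close> by (simp add: hahn_support_hahn_subst)
  show ?thesis
  proof (intro exI[of _ l] conjI)
    show "hahn_support (hahn_subst F (real l)) \<subseteq> int_alpha_ring (of_rat \<alpha>)"
      using support scaled by (auto simp: hahn_support_def)
    show "hahn_series (hahn_subst F (real l))"
      using \<open>hahn_series F\<close> \<open>l > 0\<close> by (simp add: hahn_series_hahn_subst)
    show "is_mahler (of_rat \<alpha>) (hahn_subst F (real l))"
      using \<open>is_mahler (of_rat \<alpha>) F\<close> \<open>l > 0\<close> by (rule is_mahler_hahn_subst)
  qed (rule \<open>l > 0\<close>)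
qed

end
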